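(* Let $d_m\in\mathbb{N}$, $\mathcal{D}=\{-d_m,\dots,d_m\}$, $\rho=|\rho|e^{\jmath\theta}$ with $|\rho|\in(0,1]$, $\bar\rho=\sqrt{1-|\rho|^2}$, $\mathrm{SNR}=|\rho|^2/\bar\rho^2$, and $E(\mathrm{SNR})=\frac{\mathrm{SNR}}{2+\mathrm{SNR}}=\frac{|\rho|^2}{2-|\rho|^2}$. Let $\{x[n]\}_{n\in\mathbb{Z}}$, $\{z[n]\}_{n\in\mathbb{Z}}$ be mutually independent i.i.d. $\mathcal{CN}(0,1)$ sequences, $d$ uniform on $\mathcal{D}$ and independent of them, and $y[n]=\rho\,x[n-d]+\bar\rho\,z[n]$. For $k\in\mathbb{N}$, $N=2^k$, let $J=\arg\max_{0\le n\le N-1}|x[n]|^2$ and $\widehat d_{\mathrm{MMIE}}=\arg\max_{\ell\in\mathcal{D}}|y[J+\ell]|^2$. Then $$\lim_{k\to\infty}\mathbb{P}(\widehat d_{\mathrm{MMIE}}\neq d)=0.$$ Moreover, $d_m$ need not be fixed: the same conclusion holds when $d_m=d_m(k)$ varies with $k$ provided $d_m=o\big(2^{kE(\mathrm{SNR})}\big)$. Equivalently, since $N=2^k$, $\mathbb{P}(\widehat d_{\mathrm{MMIE}}\neq d)\to0$ as $N\to\infty$.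
   Context: $\mathcal{CN}(0,1)$ denotes the circularly-symmetric complex Gaussian distribution with zero mean and unit variance; $\jmath$ is the imaginary unit. $J$ is the $k$-bit message sent from the encoder to the decoder. *)

theory Defs
  imports "HOL-Probability.Probability" "HOL-Library.Landau_Symbols"
begin

text \<open>Circularly-symmetric complex Gaussian CN(0,1): real and imaginary parts
  independent, each N(0,1/2) (standard deviation sqrt(1/2)).\<close>
definition cgauss :: "complex measure" where
  "cgauss = distr (density lborel (normal_density 0 (sqrt (1/2)))
                   \<Otimes>\<^sub>M density lborel (normal_density 0 (sqrt (1/2))))
                  borel (\<lambda>(a, b). Complex a b)"

definition delay_space :: "nat \<Rightarrow> ((int \<Rightarrow> complex) \<times> (int \<Rightarrow> complex) \<times> int) measure" where
  "delay_space dm = PiM UNIV (\<lambda>_::int. cgauss)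
                    \<Otimes>\<^sub>M (PiM UNIV (\<lambda>_::int. cgauss)
                    \<Otimes>\<^sub>M measure_pmf (pmf_of_set {- int dm .. int dm}))"

definition rx_signal :: "complex \<Rightarrow> (int \<Rightarrow> complex) \<Rightarrow> (int \<Rightarrow> complex) \<Rightarrow> int \<Rightarrow> int \<Rightarrow> complex" where
  "rx_signal \<rho> x z d n = \<rho> * x (n - d) + complex_of_real (sqrt (1 - (cmod \<rho>)\<^sup>2)) * z n"

text \<open>J = argmax_{0 \<le> n \<le> N-1} |x[n]|^2 (ties, a null event, broken by the least index).\<close>
definition mmie_J :: "(int \<Rightarrow> complex) \<Rightarrow> nat \<Rightarrow> int" where
  "mmie_J x N = int (LEAST n::nat. n < N \<and> (\<forall>m<N. (cmod (x (int m)))\<^sup>2 \<le> (cmod (x (int n)))\<^sup>2))"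

text \<open>MMIE estimate: argmax over l in {-dm..dm} of |y[J+l]|^2
  (ties, a null event, broken by the least l).\<close>
definition mmie_dhat :: "(int \<Rightarrow> complex) \<Rightarrow> int \<Rightarrow> nat \<Rightarrow> int" where
  "mmie_dhat y J dm =
     int (LEAST i::nat. i \<le> 2 * dm \<and>
            (\<forall>j\<le>2 * dm. (cmod (y (J + int j - int dm)))\<^sup>2 \<le> (cmod (y (J + int i - int dm)))\<^sup>2))
     - int dm"

definition mmie_error_event :: "complex \<Rightarrow> nat \<Rightarrow> nat \<Rightarrow> ((int \<Rightarrow> complex) \<times> (int \<Rightarrow> complex) \<times> int) set" where
  "mmie_error_event \<rho> dm k =
     {(x, z, d) \<in> space (delay_space dm).
        mmie_dhat (rx_signal \<rho> x z d) (mmie_J x (2 ^ k)) dm \<noteq> d}"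

definition mmie_perr :: "complex \<Rightarrow> nat \<Rightarrow> nat \<Rightarrow> real" where
  "mmie_perr \<rho> dm k = measure (delay_space dm) (mmie_error_event \<rho> dm k)"

text \<open>E(SNR) = SNR/(2+SNR) = |rho|^2/(2-|rho|^2).\<close>
definition mmie_E :: "complex \<Rightarrow> real" where
  "mmie_E \<rho> = (cmod \<rho>)\<^sup>2 / (2 - (cmod \<rho>)\<^sup>2)"

end

theory Submission
  imports Defs
begin

(* The energy |x[n]|^2 of a CN(0,1) sample is Exp(1)-distributed.  Put L = k ln 2 and
   \<tau> = (1 - \<eta>) L.  The peak |x[J]|^2 of the 2^k samples exceeds \<tau> except with probability
   at most exp(-2^(\<eta> k)), and then the true lag carries energy about |\<rho>|^2 \<tau>.  A wrong lag l
   sees y[J+l] = \<rho> x[J+l-d] + \<rho>bar z[J+l], built from samples independent of x[J]; to reach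
   energy c \<tau> (c < |\<rho>|^2) the pair (|x[J+l-d]|^2, |z[J+l]|^2) must dominate one of K grid
   points splitting c \<tau>, an event of probability e^(-c \<tau> (K-1)/K).  A union bound over the
   2^k peak positions, the 2 dm wrong lags and the K grid points bounds the error probability by
   exp(-2^(\<eta> k)) + 2^(\<eta> k) (e^(-\<gamma> \<tau>) + 2 dm K e^(-c \<tau> (K-1)/K)), which vanishes once
   c (K-1)/K > E(SNR), \<eta> is small and dm = o(2^(k E(SNR))).  For |\<rho>| = 1 there is no noise and
   E(SNR) = 1; this borderline case needs a threshold \<tau> adapted to dm. *)

section \<open>The circularly-symmetric complex Gaussian\<close>

lemma nn_integral_lborel_even:
  fixes f :: "real \<Rightarrow> ennreal"
  assumes [measurable]: "f \<in> borel_measurable borel" and even: "\<And>x. f (- x) = f x"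
  shows "(\<integral>\<^sup>+x. f x \<partial>lborel) = 2 * (\<integral>\<^sup>+x. f x * indicator {0..} x \<partial>lborel)"
proof -
  have "(\<integral>\<^sup>+x. f x \<partial>lborel) = (\<integral>\<^sup>+x. f x * indicator {0..} x + f x * indicator {..<0} x \<partial>lborel)"
    by (intro nn_integral_cong) (auto split: split_indicator)
  also have "\<dots> = (\<integral>\<^sup>+x. f x * indicator {0..} x \<partial>lborel) + (\<integral>\<^sup>+x. f x * indicator {..<0} x \<partial>lborel)"
    by (intro nn_integral_add) auto
  also have "(\<integral>\<^sup>+x. f x * indicator {..<0} x \<partial>lborel)
      = (\<integral>\<^sup>+x. f (0 + (-1) * x) * indicator {..<0} (0 + (-1) * x) \<partial>lborel)"
    using nn_integral_real_affine[of "\<lambda>x. f x * indicator {..<0} x" "-1" 0] by simp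
  also have "\<dots> = (\<integral>\<^sup>+x. f x * indicator {0..} x \<partial>lborel)"
    by (intro nn_integral_cong_AE AE_I[where N="{0}"]) (auto simp: even split: split_indicator)
  finally show ?thesis by (simp add: mult_2)
qed

lemma nn_integral_abs_mult_exp_neg_square_tail:
  fixes c t :: real
  assumes c: "0 < c" and t: "0 \<le> t"
  shows "(\<integral>\<^sup>+a. ennreal (\<bar>a\<bar> * exp (- (a\<^sup>2 * c)) * indicator {a. t \<le> a\<^sup>2 * c} a) \<partial>lborel)
     = ennreal (exp (- t) / c)"
proof -
  define s where "s = sqrt (t / c)"
  have s: "0 \<le> s" using c t by (simp add: s_def)
  have tail_iff: "(t \<le> a\<^sup>2 * c) = (s \<le> a)" if "0 \<le> a" for a
  proof -
    have "(t \<le> a\<^sup>2 * c) = (t / c \<le> a\<^sup>2)" using c by (simp add: divide_le_eq)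
    also have "\<dots> = (sqrt (t / c) \<le> sqrt (a\<^sup>2))" by (rule real_sqrt_le_iff[symmetric])
    finally show ?thesis using that by (simp add: s_def)
  qed
  have lim: "((\<lambda>a. - exp (- (a\<^sup>2 * c)) / (2 * c)) \<longlongrightarrow> 0) at_top"
  proof -
    have "((\<lambda>a. - exp (- (a\<^sup>2 * c)) / (2 * c)) \<longlongrightarrow> - 0 / (2 * c)) at_top"
      by (intro tendsto_intros filterlim_compose[OF exp_at_bot]
          filterlim_compose[OF filterlim_uminus_at_bot_at_top]
          filterlim_at_top_mult_tendsto_pos[OF tendsto_const c] filterlim_pow_at_top filterlim_ident)
        (use c in auto)
    then show ?thesis by simp
  qed
  have "(\<integral>\<^sup>+a. ennreal (\<bar>a\<bar> * exp (- (a\<^sup>2 * c)) * indicator {a. t \<le> a\<^sup>2 * c} a) \<partial>lborel)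
      = 2 * (\<integral>\<^sup>+a. ennreal (\<bar>a\<bar> * exp (- (a\<^sup>2 * c)) * indicator {a. t \<le> a\<^sup>2 * c} a)
                   * indicator {0..} a \<partial>lborel)"
    by (rule nn_integral_lborel_even) (auto split: split_indicator)
  also have "(\<integral>\<^sup>+a. ennreal (\<bar>a\<bar> * exp (- (a\<^sup>2 * c)) * indicator {a. t \<le> a\<^sup>2 * c} a)
                   * indicator {0..} a \<partial>lborel)
     = (\<integral>\<^sup>+a. ennreal (a * exp (- (a\<^sup>2 * c))) * indicator {s..} a \<partial>lborel)"
    using s by (intro nn_integral_cong) (auto simp: tail_iff split: split_indicator)
  also have "\<dots> = ennreal (0 - (- exp (- (s\<^sup>2 * c)) / (2 * c)))"
    by (rule nn_integral_FTC_atLeast[OF _ _ _ lim])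
      (use s c in \<open>auto intro!: derivative_eq_intros simp: field_simps\<close>)
  also have "exp (- (s\<^sup>2 * c)) = exp (- t)" using c t by (simp add: s_def)
  also have "2 * ennreal (0 - (- exp (- t) / (2 * c))) = ennreal (2 * (exp (- t) / (2 * c)))"
    using c by (subst ennreal_mult) auto
  finally show ?thesis using c by simp
qed

lemma nn_integral_inverse_one_plus_square: "(\<integral>\<^sup>+u. ennreal (1 / (1 + u\<^sup>2)) \<partial>lborel) = ennreal pi"
proof -
  have "(\<integral>\<^sup>+u. ennreal (1 / (1 + u\<^sup>2)) \<partial>lborel)
      = 2 * (\<integral>\<^sup>+u. ennreal (1 / (1 + u\<^sup>2)) * indicator {0..} u \<partial>lborel)"
    by (rule nn_integral_lborel_even) auto
  also have "(\<integral>\<^sup>+u. ennreal (1 / (1 + u\<^sup>2)) * indicator {0..} u \<partial>lborel) = ennreal (pi / 2 - arctan 0)"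
    by (rule nn_integral_FTC_atLeast[OF _ _ _ tendsto_arctan_at_top])
      (auto intro!: derivative_eq_intros simp: add_nonneg_eq_0_iff field_simps power2_eq_square)
  also have "2 * ennreal (pi / 2 - arctan 0) = ennreal (2 * (pi / 2))"
    by (subst ennreal_mult) auto
  finally show ?thesis by simp
qed

text \<open>The substitution b = a u turns the two-dimensional Gaussian tail into the product of
  the one-dimensional integrals above (the classical computation of the Gaussian integral).\<close>
lemma nn_integral_exp_neg_norm_square_tail:
  fixes t :: real
  assumes t: "0 \<le> t"
  shows "(\<integral>\<^sup>+a. \<integral>\<^sup>+b. ennreal (exp (- (a\<^sup>2 + b\<^sup>2)) * indicator {b. t \<le> a\<^sup>2 + b\<^sup>2} b) \<partial>lborel \<partial>lborel)
     = ennreal (pi * exp (- t))"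
proof -
  let ?F = "\<lambda>a u. ennreal (\<bar>a\<bar> * exp (- (a\<^sup>2 * (1 + u\<^sup>2))) * indicator {a. t \<le> a\<^sup>2 * (1 + u\<^sup>2)} a)"
  have subst: "(\<integral>\<^sup>+b. ennreal (exp (- (a\<^sup>2 + b\<^sup>2)) * indicator {b. t \<le> a\<^sup>2 + b\<^sup>2} b) \<partial>lborel)
      = (\<integral>\<^sup>+u. ?F a u \<partial>lborel)" if a: "a \<noteq> 0" for a
  proof -
    have "(\<integral>\<^sup>+b. ennreal (exp (- (a\<^sup>2 + b\<^sup>2)) * indicator {b. t \<le> a\<^sup>2 + b\<^sup>2} b) \<partial>lborel)
       = \<bar>a\<bar> * (\<integral>\<^sup>+u. ennreal (exp (- (a\<^sup>2 + (0 + a * u)\<^sup>2))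
                      * indicator {b. t \<le> a\<^sup>2 + b\<^sup>2} (0 + a * u)) \<partial>lborel)"
      by (rule nn_integral_real_affine) (use a in auto)
    also have "\<dots> = (\<integral>\<^sup>+u. \<bar>a\<bar> * ennreal (exp (- (a\<^sup>2 + (0 + a * u)\<^sup>2))
                      * indicator {b. t \<le> a\<^sup>2 + b\<^sup>2} (0 + a * u)) \<partial>lborel)"
      by (rule nn_integral_cmult[symmetric]) auto
    also have "\<dots> = (\<integral>\<^sup>+u. ?F a u \<partial>lborel)"
      by (intro nn_integral_cong)
        (auto simp: ennreal_mult[symmetric] power_mult_distrib algebra_simps split: split_indicator)
    finally show ?thesis .
  qed
  have "(\<integral>\<^sup>+a. \<integral>\<^sup>+b. ennreal (exp (- (a\<^sup>2 + b\<^sup>2)) * indicator {b. t \<le> a\<^sup>2 + b\<^sup>2} b) \<partial>lborel \<partial>lborel)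
      = (\<integral>\<^sup>+a. \<integral>\<^sup>+u. ?F a u \<partial>lborel \<partial>lborel)"
    using AE_lborel_singleton[of 0] subst by (intro nn_integral_cong_AE) (auto elim!: AE_mp)
  also have "\<dots> = (\<integral>\<^sup>+u. \<integral>\<^sup>+a. ?F a u \<partial>lborel \<partial>lborel)"
    by (rule lborel_pair.Fubini') auto
  also have "\<dots> = (\<integral>\<^sup>+u. ennreal (exp (- t)) * ennreal (1 / (1 + u\<^sup>2)) \<partial>lborel)"
  proof (intro nn_integral_cong)
    fix u :: real
    have "0 < 1 + u\<^sup>2" by (simp add: add_pos_nonneg)
    from nn_integral_abs_mult_exp_neg_square_tail[OF this t]
    show "(\<integral>\<^sup>+a. ?F a u \<partial>lborel) = ennreal (exp (- t)) * ennreal (1 / (1 + u\<^sup>2))"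
      by (simp add: ennreal_mult[symmetric])
  qed
  also have "\<dots> = ennreal (exp (- t)) * ennreal pi"
    by (subst nn_integral_cmult) (auto simp: nn_integral_inverse_one_plus_square)
  finally show ?thesis by (simp add: ennreal_mult[symmetric] mult.commute)
qed

abbreviation normal_half_variance :: "real measure" where
  "normal_half_variance \<equiv> density lborel (normal_density 0 (sqrt (1/2)))"

lemma sets_cgauss[simp, measurable_cong]: "sets cgauss = sets borel"
  by (simp add: cgauss_def)

lemma space_cgauss[simp]: "space cgauss = UNIV"
  by (simp add: cgauss_def)

lemma measurable_Complex_pair[measurable]: "(\<lambda>(a, b). Complex a b) \<in> borel_measurable (borel \<Otimes>\<^sub>M borel)"
proof -
  have "(\<lambda>(a, b). Complex a b) = (\<lambda>p. complex_of_real (fst p) + \<i> * complex_of_real (snd p))"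
    by (auto simp: complex_eq_iff)
  then show ?thesis by simp
qed

lemma measurable_Complex_normal_pair:
  "(\<lambda>(a, b). Complex a b) \<in> borel_measurable (normal_half_variance \<Otimes>\<^sub>M normal_half_variance)"
  by (simp add: measurable_cong_sets[OF sets_pair_measure_cong[OF sets_density sets_density] refl])

lemma prob_space_cgauss: "prob_space cgauss"
proof -
  interpret prob_space normal_half_variance by (rule prob_space_normal_density) simp
  interpret pair_prob_space normal_half_variance normal_half_variance by unfold_locales
  show ?thesis
    unfolding cgauss_def by (rule prob_space_distr[OF measurable_Complex_normal_pair])
qed

interpretation cgauss: prob_space cgauss
  by (rule prob_space_cgauss)

lemma normal_density_mult_emeasure_slice:
  "ennreal (normal_density 0 (sqrt (1/2)) a) * emeasure normal_half_variance {b. t \<le> a\<^sup>2 + b\<^sup>2}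
     = ennreal (1 / pi) * (\<integral>\<^sup>+b. ennreal (exp (- (a\<^sup>2 + b\<^sup>2)) * indicator {b. t \<le> a\<^sup>2 + b\<^sup>2} b) \<partial>lborel)"
proof -
  have "{b. t \<le> a\<^sup>2 + b\<^sup>2} \<in> sets borel" by measurable
  then have "emeasure normal_half_variance {b. t \<le> a\<^sup>2 + b\<^sup>2}
      = (\<integral>\<^sup>+b. ennreal (exp (- b\<^sup>2) / sqrt pi) * indicator {b. t \<le> a\<^sup>2 + b\<^sup>2} b \<partial>lborel)"
    by (subst emeasure_density) (auto intro!: nn_integral_cong simp: normal_density_def split: split_indicator)
  then have "ennreal (normal_density 0 (sqrt (1/2)) a) * emeasure normal_half_variance {b. t \<le> a\<^sup>2 + b\<^sup>2}
      = (\<integral>\<^sup>+b. ennreal (normal_density 0 (sqrt (1/2)) a)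
               * (ennreal (exp (- b\<^sup>2) / sqrt pi) * indicator {b. t \<le> a\<^sup>2 + b\<^sup>2} b) \<partial>lborel)"
    by (simp add: nn_integral_cmult)
  also have "\<dots> = (\<integral>\<^sup>+b. ennreal (1 / pi) * ennreal (exp (- (a\<^sup>2 + b\<^sup>2)) * indicator {b. t \<le> a\<^sup>2 + b\<^sup>2} b) \<partial>lborel)"
    by (intro nn_integral_cong)
      (auto simp: normal_density_def ennreal_mult[symmetric] exp_add[symmetric] split: split_indicator)
  also have "\<dots> = ennreal (1 / pi) * (\<integral>\<^sup>+b. ennreal (exp (- (a\<^sup>2 + b\<^sup>2)) * indicator {b. t \<le> a\<^sup>2 + b\<^sup>2} b) \<partial>lborel)"
    by (rule nn_integral_cmult) auto
  finally show ?thesis .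
qed

lemma emeasure_cgauss_norm_square_ge:
  fixes t :: real
  assumes t: "0 \<le> t"
  shows "emeasure cgauss {w. t \<le> (cmod w)\<^sup>2} = ennreal (exp (- t))"
proof -
  interpret N: prob_space normal_half_variance by (rule prob_space_normal_density) simp
  interpret pair_sigma_finite normal_half_variance normal_half_variance by unfold_locales
  let ?S = "{p :: real \<times> real. t \<le> (fst p)\<^sup>2 + (snd p)\<^sup>2}"
  have "{p \<in> space (borel \<Otimes>\<^sub>M borel). t \<le> (fst p)\<^sup>2 + (snd p)\<^sup>2} \<in> sets (borel \<Otimes>\<^sub>M borel)"
    by measurable
  then have S: "?S \<in> sets (normal_half_variance \<Otimes>\<^sub>M normal_half_variance)"
    by (simp add: space_pair_measure sets_pair_measure_cong[OF sets_density sets_density])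
  have "emeasure cgauss {w. t \<le> (cmod w)\<^sup>2}
      = emeasure (normal_half_variance \<Otimes>\<^sub>M normal_half_variance)
          ((\<lambda>(a, b). Complex a b) -` {w. t \<le> (cmod w)\<^sup>2}
             \<inter> space (normal_half_variance \<Otimes>\<^sub>M normal_half_variance))"
    unfolding cgauss_def by (rule emeasure_distr[OF measurable_Complex_normal_pair]) measurable
  also have "(\<lambda>(a, b). Complex a b) -` {w. t \<le> (cmod w)\<^sup>2}
      \<inter> space (normal_half_variance \<Otimes>\<^sub>M normal_half_variance) = ?S"
    by (auto simp: space_pair_measure cmod_def)
  also have "emeasure (normal_half_variance \<Otimes>\<^sub>M normal_half_variance) ?S
      = (\<integral>\<^sup>+a. emeasure normal_half_variance (Pair a -` ?S) \<partial>normal_half_variance)"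
    by (rule N.emeasure_pair_measure_alt[OF S])
  also have "\<dots> = (\<integral>\<^sup>+a. ennreal (normal_density 0 (sqrt (1/2)) a)
                     * emeasure normal_half_variance {b. t \<le> a\<^sup>2 + b\<^sup>2} \<partial>lborel)"
    by (subst nn_integral_density) (auto simp: vimage_def)
  also have "\<dots> = (\<integral>\<^sup>+a. ennreal (1 / pi) * (\<integral>\<^sup>+b. ennreal (exp (- (a\<^sup>2 + b\<^sup>2))
                     * indicator {b. t \<le> a\<^sup>2 + b\<^sup>2} b) \<partial>lborel) \<partial>lborel)"
    by (simp only: normal_density_mult_emeasure_slice)
  also have "\<dots> = ennreal (1 / pi) * ennreal (pi * exp (- t))"
    by (subst nn_integral_cmult)
      (auto simp del: minus_add_distrib simp: nn_integral_exp_neg_norm_square_tail[OF t])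
  also have "\<dots> = ennreal (exp (- t))"
    by (simp add: ennreal_mult[symmetric])
  finally show ?thesis .
qed

lemma measure_cgauss_norm_square_ge:
  "0 \<le> t \<Longrightarrow> measure cgauss {w. t \<le> (cmod w)\<^sup>2} = exp (- t)"
  using emeasure_cgauss_norm_square_ge by (simp add: cgauss.emeasure_eq_measure)

lemma measure_cgauss_norm_square_less:
  assumes "0 \<le> t"
  shows "measure cgauss {w. (cmod w)\<^sup>2 < t} = 1 - exp (- t)"
proof -
  have "{w. (cmod w)\<^sup>2 < t} = space cgauss - {w. t \<le> (cmod w)\<^sup>2}" by auto
  then show ?thesis
    using cgauss.prob_compl[of "{w. t \<le> (cmod w)\<^sup>2}"] measure_cgauss_norm_square_ge[OF assms] by simp
qed

lemma measure_cgauss_norm_gt_le: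
  assumes b: "0 < b" and r: "0 \<le> r"
  shows "measure cgauss {w. r < b * cmod w} \<le> exp (- ((r / b)\<^sup>2))"
proof -
  have "{w. r < b * cmod w} \<subseteq> {w. (r / b)\<^sup>2 \<le> (cmod w)\<^sup>2}"
    using b r by (auto simp: pos_divide_le_eq mult.commute intro!: power_mono)
  then have "measure cgauss {w. r < b * cmod w} \<le> measure cgauss {w. (r / b)\<^sup>2 \<le> (cmod w)\<^sup>2}"
    by (intro cgauss.finite_measure_mono) measurable
  then show ?thesis by (simp add: measure_cgauss_norm_square_ge)
qed

abbreviation cgauss_seq :: "(int \<Rightarrow> complex) measure" where
  "cgauss_seq \<equiv> PiM UNIV (\<lambda>_::int. cgauss)"

abbreviation uniform_delay :: "nat \<Rightarrow> int measure" where
  "uniform_delay dm \<equiv> measure_pmf (pmf_of_set {- int dm .. int dm})"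

interpretation cgauss_seq: product_prob_space "\<lambda>_::int. cgauss" UNIV
  by (simp add: product_prob_space_def product_prob_space_axioms_def product_sigma_finite_def
      cgauss.sigma_finite_measure_axioms prob_space_cgauss)

lemma space_cgauss_seq[simp]: "space cgauss_seq = UNIV"
  by (auto simp: space_PiM PiE_def extensional_def)

lemma UNIV_in_sets_cgauss_seq[simp]: "UNIV \<in> sets cgauss_seq"
  using sets.top[of cgauss_seq] by simp

lemma prob_space_cgauss_seq: "prob_space cgauss_seq"
  by (rule prob_space_PiM) (rule prob_space_cgauss)

lemma measure_cgauss_seq_UNIV[simp]: "measure cgauss_seq UNIV = 1"
  using prob_space.prob_space[OF prob_space_cgauss_seq] by simp

lemma sets_cgauss_seq_Collect: "Measurable.pred cgauss_seq P \<Longrightarrow> {x. P x} \<in> sets cgauss_seq"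
  by (simp add: pred_def)

lemma measure_cgauss_seq_cylinder:
  assumes "finite I" "\<And>i. i \<in> I \<Longrightarrow> A i \<in> sets borel"
  shows "measure cgauss_seq {x. \<forall>i\<in>I. x i \<in> A i} = (\<Prod>i\<in>I. measure cgauss (A i))"
proof -
  have "emeasure cgauss_seq {x \<in> space cgauss_seq. \<forall>i\<in>I. x i \<in> A i} = (\<Prod>i\<in>I. emeasure cgauss (A i))"
    using assms by (intro cgauss_seq.emeasure_PiM_Collect) auto
  then show ?thesis
    by (simp add: cgauss.emeasure_eq_measure cgauss_seq.emeasure_eq_measure prod_ennreal prod_nonneg)
qed

lemma measure_cgauss_seq_coord:
  assumes "A \<in> sets borel"
  shows "measure cgauss_seq {x. x j \<in> A} = measure cgauss A"
  using measure_cgauss_seq_cylinder[of "{j}" "\<lambda>_. A"] assms by simp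

lemma measure_cgauss_seq_two_coords:
  assumes "j \<noteq> m" "A \<in> sets borel" "B \<in> sets borel"
  shows "measure cgauss_seq {x. x j \<in> A \<and> x m \<in> B} = measure cgauss A * measure cgauss B"
proof -
  have "{x. \<forall>i\<in>{j, m}. x i \<in> (if i = j then A else B)} = {x. x j \<in> A \<and> x m \<in> B}"
    using assms by auto
  then show ?thesis
    using measure_cgauss_seq_cylinder[of "{j, m}" "\<lambda>i. if i = j then A else B"] assms by auto
qed

lemma prob_space_delay_space: "prob_space (delay_space dm)"
  unfolding delay_space_def
  by (intro prob_space_pair prob_space_cgauss_seq) (auto intro!: prob_space_measure_pmf)

lemma sets_delay_space_box:
  "A \<in> sets cgauss_seq \<Longrightarrow> B \<in> sets cgauss_seq \<Longrightarrow> A \<times> (B \<times> C) \<in> sets (delay_space dm)"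
  unfolding delay_space_def by (intro pair_measureI) auto

lemma measure_delay_space_box:
  assumes A: "A \<in> sets cgauss_seq" and B: "B \<in> sets cgauss_seq"
  shows "measure (delay_space dm) (A \<times> (B \<times> C))
       = measure cgauss_seq A * measure cgauss_seq B * measure (uniform_delay dm) C"
proof -
  interpret XU: pair_prob_space cgauss_seq "uniform_delay dm" by unfold_locales
  interpret D: prob_space "delay_space dm" by (rule prob_space_delay_space)
  have C: "C \<in> sets (uniform_delay dm)" by simp
  have "emeasure (delay_space dm) (A \<times> (B \<times> C))
      = emeasure cgauss_seq A * (emeasure cgauss_seq B * emeasure (uniform_delay dm) C)"
    unfolding delay_space_def
    by (simp add: XU.emeasure_pair_measure_Times measure_pmf.emeasure_pair_measure_Times A B C)
  then have "ennreal (measure (delay_space dm) (A \<times> (B \<times> C)))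
      = ennreal (measure cgauss_seq A * measure cgauss_seq B * measure (uniform_delay dm) C)"
    by (simp only: D.emeasure_eq_measure cgauss_seq.emeasure_eq_measure measure_pmf.emeasure_eq_measure
        ennreal_mult[symmetric] measure_nonneg mult_nonneg_nonneg mult.assoc)
  then show ?thesis
    by (subst (asm) ennreal_inj) (auto intro: mult_nonneg_nonneg)
qed

lemma measure_uniform_delay_singleton:
  "d \<in> {- int dm .. int dm} \<Longrightarrow> measure (uniform_delay dm) {d} = 1 / (2 * real dm + 1)"
  by (simp add: measure_pmf_single pmf_of_set)

lemma measure_uniform_delay_outside: "measure (uniform_delay dm) (- {- int dm .. int dm}) = 0"
  by (subst measure_pmf_zero_iff) (auto simp: disjnt_def)

lemma Least_argmax_atMost:
  fixes f :: "nat \<Rightarrow> 'a::linorder" and N :: nat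
  defines "n \<equiv> LEAST n. n \<le> N \<and> (\<forall>m\<le>N. f m \<le> f n)"
  shows "n \<le> N" and "\<And>m. m \<le> N \<Longrightarrow> f m \<le> f n"
proof -
  have "Max (f ` {..N}) \<in> f ` {..N}"
    by (rule Max_in) auto
  then obtain n' where "n' \<le> N" and max: "Max (f ` {..N}) = f n'"
    by (metis atMost_iff imageE)
  then have "\<exists>n. n \<le> N \<and> (\<forall>m\<le>N. f m \<le> f n)"
    by (auto simp flip: max intro!: exI[of _ n'] Max_ge)
  from LeastI_ex[OF this] show "n \<le> N" "\<And>m. m \<le> N \<Longrightarrow> f m \<le> f n"
    unfolding n_def by auto
qed

lemma
  assumes N: "0 < N"
  shows mmie_J_in_window: "mmie_J x N \<in> {0..<int N}"
    and mmie_J_is_max: "j \<in> {0..<int N} \<Longrightarrow> (cmod (x j))\<^sup>2 \<le> (cmod (x (mmie_J x N)))\<^sup>2"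
proof -
  have eq: "(\<lambda>n. n < N \<and> (\<forall>m<N. (cmod (x (int m)))\<^sup>2 \<le> (cmod (x (int n)))\<^sup>2))
      = (\<lambda>n. n \<le> N - 1 \<and> (\<forall>m\<le>N - 1. (cmod (x (int m)))\<^sup>2 \<le> (cmod (x (int n)))\<^sup>2))"
    using N by (auto simp: fun_eq_iff less_Suc_eq_le)
  note L = Least_argmax_atMost[where f="\<lambda>n. (cmod (x (int n)))\<^sup>2" and N="N - 1"]
  show "mmie_J x N \<in> {0..<int N}"
    unfolding mmie_J_def eq using L N by auto
  have max: "(cmod (x (int m)))\<^sup>2 \<le> (cmod (x (mmie_J x N)))\<^sup>2" if "m < N" for m
    unfolding mmie_J_def eq using L N that by auto
  assume "j \<in> {0..<int N}"
  then have "nat j < N" "int (nat j) = j" by auto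
  then show "(cmod (x j))\<^sup>2 \<le> (cmod (x (mmie_J x N)))\<^sup>2"
    by (metis max)
qed

lemma
  fixes y :: "int \<Rightarrow> complex"
  shows mmie_dhat_in_delays: "mmie_dhat y J dm \<in> {- int dm .. int dm}"
    and mmie_dhat_is_max: "\<And>l. l \<in> {- int dm .. int dm} \<Longrightarrow>
           (cmod (y (J + l)))\<^sup>2 \<le> (cmod (y (J + mmie_dhat y J dm)))\<^sup>2"
proof -
  define i where "i = (LEAST i. i \<le> 2 * dm \<and>
      (\<forall>j\<le>2 * dm. (cmod (y (J + int j - int dm)))\<^sup>2 \<le> (cmod (y (J + int i - int dm)))\<^sup>2))"
  note i = Least_argmax_atMost[where f="\<lambda>i. (cmod (y (J + int i - int dm)))\<^sup>2" and N="2 * dm", folded i_def]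
  have dhat: "mmie_dhat y J dm = int i - int dm"
    unfolding mmie_dhat_def i_def ..
  show "mmie_dhat y J dm \<in> {- int dm .. int dm}"
    using i(1) by (simp add: dhat)
  fix l assume l: "l \<in> {- int dm .. int dm}"
  then have "nat (l + int dm) \<le> 2 * dm" and "J + int (nat (l + int dm)) - int dm = J + l"
    by auto
  with i(2) show "(cmod (y (J + l)))\<^sup>2 \<le> (cmod (y (J + mmie_dhat y J dm)))\<^sup>2"
    by (metis dhat add_diff_eq)
qed

lemma measurable_mmie_J:
  assumes [measurable]: "\<And>n. (\<lambda>\<omega>. X \<omega> n) \<in> borel_measurable M"
  shows "(\<lambda>\<omega>. mmie_J (X \<omega>) N) \<in> measurable M (count_space UNIV)"
proof -
  have "Measurable.pred M (\<lambda>\<omega>. n < N \<and> (\<forall>m\<in>{..<N}. (cmod (X \<omega> (int m)))\<^sup>2 \<le> (cmod (X \<omega> (int n)))\<^sup>2))"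
    for n by (intro pred_intros_finite pred_intros_logic) measurable
  then have "(\<lambda>\<omega>. LEAST n. n < N \<and> (\<forall>m\<in>{..<N}. (cmod (X \<omega> (int m)))\<^sup>2 \<le> (cmod (X \<omega> (int n)))\<^sup>2))
      \<in> measurable M (count_space UNIV)"
    by (intro measurable_Least) (simp add: pred_def)
  then show ?thesis unfolding mmie_J_def by (simp add: lessThan_def)
qed

lemma measurable_mmie_dhat:
  assumes Y: "\<And>n. (\<lambda>\<omega>. Y \<omega> n) \<in> borel_measurable M"
    and J: "J \<in> measurable M (count_space UNIV)"
  shows "(\<lambda>\<omega>. mmie_dhat (Y \<omega>) (J \<omega>) dm) \<in> measurable M (count_space UNIV)"
proof -
  have [measurable]: "(\<lambda>\<omega>. Y \<omega> (J \<omega> + a - b)) \<in> borel_measurable M" for a b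
    by (rule measurable_compose_countable[where f="\<lambda>i \<omega>. Y \<omega> (i + a - b)", OF _ J]) (rule Y)
  have "Measurable.pred M (\<lambda>\<omega>. i \<le> 2 * dm \<and> (\<forall>j\<le>2 * dm.
      (cmod (Y \<omega> (J \<omega> + int j - int dm)))\<^sup>2 \<le> (cmod (Y \<omega> (J \<omega> + int i - int dm)))\<^sup>2))" for i
    by measurable
  then have "(\<lambda>\<omega>. LEAST i. i \<le> 2 * dm \<and> (\<forall>j\<le>2 * dm.
      (cmod (Y \<omega> (J \<omega> + int j - int dm)))\<^sup>2 \<le> (cmod (Y \<omega> (J \<omega> + int i - int dm)))\<^sup>2))
      \<in> measurable M (count_space UNIV)"
    by (intro measurable_Least) (simp add: pred_def)
  then show ?thesis
    unfolding mmie_dhat_def by (rule measurable_compose) (rule measurable_count_space)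
qed

lemma mmie_error_event_sets: "mmie_error_event \<rho> dm k \<in> sets (delay_space dm)"
proof -
  let ?M = "delay_space dm"
  have [measurable]: "(\<lambda>\<omega>. fst \<omega> n) \<in> borel_measurable ?M" "(\<lambda>\<omega>. fst (snd \<omega>) n) \<in> borel_measurable ?M"
    and delay[measurable]: "(\<lambda>\<omega>. snd (snd \<omega>)) \<in> measurable ?M (count_space UNIV)" for n
    unfolding delay_space_def by measurable
  have [measurable]: "(\<lambda>\<omega>. fst \<omega> (n - snd (snd \<omega>))) \<in> borel_measurable ?M" for n
    by (rule measurable_compose_countable[where f="\<lambda>i \<omega>. fst \<omega> (n - i)", OF _ delay]) measurable
  have Y: "(\<lambda>\<omega>. rx_signal \<rho> (fst \<omega>) (fst (snd \<omega>)) (snd (snd \<omega>)) n) \<in> borel_measurable ?M" for n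
    unfolding rx_signal_def by measurable
  have J: "(\<lambda>\<omega>. mmie_J (fst \<omega>) (2 ^ k)) \<in> measurable ?M (count_space UNIV)"
    by (rule measurable_mmie_J) measurable
  have dhat: "(\<lambda>\<omega>. mmie_dhat (rx_signal \<rho> (fst \<omega>) (fst (snd \<omega>)) (snd (snd \<omega>)))
      (mmie_J (fst \<omega>) (2 ^ k)) dm) \<in> measurable ?M (count_space UNIV)"
    by (rule measurable_mmie_dhat[OF Y J])
  have "Measurable.pred ?M (\<lambda>\<omega>. mmie_dhat (rx_signal \<rho> (fst \<omega>) (fst (snd \<omega>)) (snd (snd \<omega>)))
      (mmie_J (fst \<omega>) (2 ^ k)) dm \<noteq> snd (snd \<omega>))"
    by (rule measurable_compose_countable[where f="\<lambda>i \<omega>. i \<noteq> snd (snd \<omega>)", OF _ dhat]) measurable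
  then show ?thesis
    by (simp add: mmie_error_event_def pred_def split_beta')
qed

section \<open>A union bound for the error probability\<close>

abbreviation rho_bar :: "complex \<Rightarrow> real" where
  "rho_bar \<rho> \<equiv> sqrt (1 - (cmod \<rho>)\<^sup>2)"

lemma measure_UN_Un_UN_le:
  assumes "finite I" "\<And>i. i \<in> I \<Longrightarrow> finite (P i)"
    and "\<And>i. i \<in> I \<Longrightarrow> A i \<in> sets M" "\<And>i p. i \<in> I \<Longrightarrow> p \<in> P i \<Longrightarrow> B i p \<in> sets M"
  shows "measure M (\<Union>i\<in>I. A i \<union> (\<Union>p\<in>P i. B i p))
       \<le> (\<Sum>i\<in>I. measure M (A i) + (\<Sum>p\<in>P i. measure M (B i p)))"
proof -
  have "measure M (\<Union>i\<in>I. A i \<union> (\<Union>p\<in>P i. B i p)) \<le> (\<Sum>i\<in>I. measure M (A i \<union> (\<Union>p\<in>P i. B i p)))"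
    using assms by (intro measure_UNION_le sets.Un sets.finite_UN) auto
  also have "\<dots> \<le> (\<Sum>i\<in>I. measure M (A i) + (\<Sum>p\<in>P i. measure M (B i p)))"
  proof (rule sum_mono)
    fix i assume i: "i \<in> I"
    have "measure M (A i \<union> (\<Union>p\<in>P i. B i p)) \<le> measure M (A i) + measure M (\<Union>p\<in>P i. B i p)"
      using assms i by (intro measure_Un_le sets.finite_UN) auto
    also have "measure M (\<Union>p\<in>P i. B i p) \<le> (\<Sum>p\<in>P i. measure M (B i p))"
      using assms i by (intro measure_UNION_le) auto
    finally show "measure M (A i \<union> (\<Union>p\<in>P i. B i p)) \<le> measure M (A i) + (\<Sum>p\<in>P i. measure M (B i p))"
      by simp
  qed
  finally show ?thesis .
qed

lemma sqrt_margin_less_noise: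
  fixes \<rho> u w :: complex
  assumes b: "0 \<le> b" and peak: "\<tau> \<le> (cmod u)\<^sup>2" and weak: "(cmod (\<rho> * u + complex_of_real b * w))\<^sup>2 < v"
  shows "cmod \<rho> * sqrt \<tau> - sqrt v < b * cmod w"
proof -
  have "sqrt \<tau> \<le> cmod u"
    using peak real_sqrt_le_mono by fastforce
  then have "cmod \<rho> * sqrt \<tau> \<le> cmod (\<rho> * u)"
    by (simp add: norm_mult mult_left_mono)
  also have "\<dots> \<le> cmod (\<rho> * u + complex_of_real b * w) + cmod (complex_of_real b * w)"
    using norm_triangle_ineq4[of "\<rho> * u + complex_of_real b * w" "complex_of_real b * w"] by simp
  also have "cmod (\<rho> * u + complex_of_real b * w) < sqrt v"
    using weak real_sqrt_less_mono by fastforce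
  also have "cmod (complex_of_real b * w) = b * cmod w"
    using b by (simp add: norm_mult)
  finally show ?thesis by simp
qed

lemma borel_sets_norm_square:
  "{w. t \<le> (cmod w)\<^sup>2} \<in> sets borel" "{w. (cmod w)\<^sup>2 < t} \<in> sets borel" "{w. r < b * cmod w} \<in> sets borel"
  by measurable

type_synonym outcome = "(int \<Rightarrow> complex) \<times> (int \<Rightarrow> complex) \<times> int"

text \<open>\<open>\<tau>\<close> is the threshold for the peak energy |x[J]|^2 and \<open>v\<close> the energy a wrong lag must
  reach to beat the true one; the K pairs (\<open>tx i\<close>, \<open>tz i\<close>) cover every way in which a wrong
  lag can collect the energy \<open>v\<close> from its signal part and its noise part.\<close>
locale mmie_union_bound =
  fixes \<rho> :: complex and dm k K :: nat and \<tau> v :: real and tx tz :: "nat \<Rightarrow> real"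
  assumes norm_le_1: "cmod \<rho> \<le> 1"
    and tau_nonneg: "0 \<le> \<tau>"
    and tx_nonneg: "\<And>i. 0 \<le> tx i" and tz_nonneg: "\<And>i. 0 \<le> tz i"
    and energy_split: "\<And>u w. v \<le> (cmod (\<rho> * u + complex_of_real (rho_bar \<rho>) * w))\<^sup>2 \<Longrightarrow>
                         \<exists>i<K. tx i \<le> (cmod u)\<^sup>2 \<and> tz i \<le> (cmod w)\<^sup>2"
begin

lemma rho_bar_nonneg: "0 \<le> rho_bar \<rho>"
  using norm_le_1 by (simp add: power_le_one)

lemma mmie_error_cases:
  assumes err: "mmie_dhat (rx_signal \<rho> x z d) (mmie_J x (2 ^ k)) dm \<noteq> d"
    and d: "d \<in> {- int dm .. int dm}"
  obtains "\<forall>j\<in>{0..<int (2 ^ k)}. (cmod (x j))\<^sup>2 < \<tau>"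
  | j where "j \<in> {0..<int (2 ^ k)}" "\<tau> \<le> (cmod (x j))\<^sup>2"
      "cmod \<rho> * sqrt \<tau> - sqrt v < rho_bar \<rho> * cmod (z (j + d))"
  | j l i where "j \<in> {0..<int (2 ^ k)}" "\<tau> \<le> (cmod (x j))\<^sup>2" "l \<in> {- int dm .. int dm} - {d}" "i < K"
      "tx i \<le> (cmod (x (j + l - d)))\<^sup>2" "tz i \<le> (cmod (z (j + l)))\<^sup>2"
proof -
  define J where "J = mmie_J x (2 ^ k)"
  define y where "y = rx_signal \<rho> x z d"
  define l where "l = mmie_dhat y J dm"
  have J: "J \<in> {0..<int (2 ^ k)}"
    unfolding J_def by (rule mmie_J_in_window) simp
  have J_max: "(cmod (x j))\<^sup>2 \<le> (cmod (x J))\<^sup>2" if "j \<in> {0..<int (2 ^ k)}" for j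
    unfolding J_def using that by (rule mmie_J_is_max[rotated]) simp
  have l: "l \<in> {- int dm .. int dm} - {d}"
    using mmie_dhat_in_delays err by (auto simp: l_def y_def J_def)
  have y_le: "(cmod (y (J + d)))\<^sup>2 \<le> (cmod (y (J + l)))\<^sup>2"
    unfolding l_def using mmie_dhat_is_max[OF d] .
  consider "(cmod (x J))\<^sup>2 < \<tau>" | "\<tau> \<le> (cmod (x J))\<^sup>2" "(cmod (y (J + d)))\<^sup>2 < v"
    | "\<tau> \<le> (cmod (x J))\<^sup>2" "v \<le> (cmod (y (J + l)))\<^sup>2"
    using y_le by linarith
  then show thesis
  proof cases
    case 1
    then have "\<forall>j\<in>{0..<int (2 ^ k)}. (cmod (x j))\<^sup>2 < \<tau>"
      by (meson J_max order.strict_trans1)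
    then show thesis by (rule that(1))
  next
    case 2
    have "(cmod (\<rho> * x J + complex_of_real (rho_bar \<rho>) * z (J + d)))\<^sup>2 < v"
      using 2(2) by (simp add: y_def rx_signal_def)
    with rho_bar_nonneg 2(1) have "cmod \<rho> * sqrt \<tau> - sqrt v < rho_bar \<rho> * cmod (z (J + d))"
      by (rule sqrt_margin_less_noise)
    then show thesis by (rule that(2)[OF J 2(1)])
  next
    case 3
    have "v \<le> (cmod (\<rho> * x (J + l - d) + complex_of_real (rho_bar \<rho>) * z (J + l)))\<^sup>2"
      using 3(2) by (simp add: y_def rx_signal_def)
    then obtain i where "i < K" "tx i \<le> (cmod (x (J + l - d)))\<^sup>2" "tz i \<le> (cmod (z (J + l)))\<^sup>2"
      using energy_split by blast
    then show thesis by (rule that(3)[OF J 3(1) l])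
  qed
qed

definition weak_peak :: "outcome set" where
  "weak_peak = {x. \<forall>j\<in>{0..<int (2 ^ k)}. (cmod (x j))\<^sup>2 < \<tau>} \<times> (UNIV \<times> UNIV)"

definition delay_outside :: "outcome set" where
  "delay_outside = UNIV \<times> (UNIV \<times> - {- int dm .. int dm})"

definition noisy_peak :: "int \<times> int \<Rightarrow> outcome set" where
  "noisy_peak = (\<lambda>(d, j). {x. \<tau> \<le> (cmod (x j))\<^sup>2}
     \<times> ({z. cmod \<rho> * sqrt \<tau> - sqrt v < rho_bar \<rho> * cmod (z (j + d))} \<times> {d}))"

definition spurious_lag :: "int \<times> int \<Rightarrow> int \<times> nat \<Rightarrow> outcome set" where
  "spurious_lag = (\<lambda>(d, j) (l, i). {x. \<tau> \<le> (cmod (x j))\<^sup>2 \<and> tx i \<le> (cmod (x (j + l - d)))\<^sup>2}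
     \<times> ({z. tz i \<le> (cmod (z (j + l)))\<^sup>2} \<times> {d}))"

abbreviation wrong_lags :: "int \<times> int \<Rightarrow> (int \<times> nat) set" where
  "wrong_lags p \<equiv> ({- int dm .. int dm} - {fst p}) \<times> {..<K}"

abbreviation peak_errors :: "outcome set" where
  "peak_errors \<equiv> \<Union>p\<in>{- int dm .. int dm} \<times> {0..<int (2 ^ k)}.
     noisy_peak p \<union> (\<Union>q\<in>wrong_lags p. spurious_lag p q)"

lemma mmie_error_event_subset: "mmie_error_event \<rho> dm k \<subseteq> weak_peak \<union> delay_outside \<union> peak_errors"
proof
  fix \<omega> assume \<omega>: "\<omega> \<in> mmie_error_event \<rho> dm k"
  obtain x z d where \<omega>_eq: "\<omega> = (x, z, d)"
    by (cases \<omega>) auto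
  show "\<omega> \<in> weak_peak \<union> delay_outside \<union> peak_errors"
  proof (cases "d \<in> {- int dm .. int dm}")
    case False
    then show ?thesis by (simp add: \<omega>_eq delay_outside_def)
  next
    case d: True
    have "mmie_dhat (rx_signal \<rho> x z d) (mmie_J x (2 ^ k)) dm \<noteq> d"
      using \<omega> by (simp add: \<omega>_eq mmie_error_event_def)
    then show ?thesis
      using d
    proof (cases rule: mmie_error_cases)
      case 1
      then show ?thesis by (simp add: \<omega>_eq weak_peak_def)
    next
      case (2 j)
      then have "\<omega> \<in> noisy_peak (d, j)" by (simp add: \<omega>_eq noisy_peak_def)
      moreover have "(d, j) \<in> {- int dm .. int dm} \<times> {0..<int (2 ^ k)}" using 2 d by simp
      ultimately show ?thesis by (intro UnI2 UN_I[of "(d, j)"] UnI1)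
    next
      case (3 j l i)
      then have "\<omega> \<in> spurious_lag (d, j) (l, i)" by (simp add: \<omega>_eq spurious_lag_def)
      moreover have "(d, j) \<in> {- int dm .. int dm} \<times> {0..<int (2 ^ k)}" "(l, i) \<in> wrong_lags (d, j)"
        using 3 d by auto
      ultimately show ?thesis by (intro UnI2 UN_I[of "(d, j)"] UN_I[of "(l, i)"])
    qed
  qed
qed

lemma sets_error_events:
  shows "weak_peak \<in> sets (delay_space dm)" "delay_outside \<in> sets (delay_space dm)"
    and "noisy_peak p \<in> sets (delay_space dm)" "spurious_lag p q \<in> sets (delay_space dm)"
  unfolding weak_peak_def delay_outside_def noisy_peak_def spurious_lag_def case_prod_beta
  by (intro sets_delay_space_box sets_cgauss_seq_Collect UNIV_in_sets_cgauss_seq; measurable)+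

lemma measure_weak_peak: "measure (delay_space dm) weak_peak = (1 - exp (- \<tau>)) ^ 2 ^ k"
proof -
  have "measure cgauss_seq {x. \<forall>j\<in>{0..<int (2 ^ k)}. (cmod (x j))\<^sup>2 < \<tau>} = (1 - exp (- \<tau>)) ^ 2 ^ k"
    using measure_cgauss_seq_cylinder[of "{0..<int (2 ^ k)}" "\<lambda>_. {w. (cmod w)\<^sup>2 < \<tau>}"]
    by (simp add: borel_sets_norm_square measure_cgauss_norm_square_less tau_nonneg nat_power_eq)
  then show ?thesis
    unfolding weak_peak_def
    by (subst measure_delay_space_box) (auto intro!: sets_cgauss_seq_Collect)
qed

lemma measure_delay_outside: "measure (delay_space dm) delay_outside = 0"
  unfolding delay_outside_def by (simp add: measure_delay_space_box measure_uniform_delay_outside)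

lemma measure_noisy_peak:
  assumes "d \<in> {- int dm .. int dm}"
  shows "measure (delay_space dm) (noisy_peak (d, j))
       = exp (- \<tau>) * measure cgauss {w. cmod \<rho> * sqrt \<tau> - sqrt v < rho_bar \<rho> * cmod w} / (2 * real dm + 1)"
proof -
  have "measure (delay_space dm) (noisy_peak (d, j))
      = measure cgauss_seq {x. \<tau> \<le> (cmod (x j))\<^sup>2}
        * measure cgauss_seq {z. cmod \<rho> * sqrt \<tau> - sqrt v < rho_bar \<rho> * cmod (z (j + d))}
        * measure (uniform_delay dm) {d}"
    unfolding noisy_peak_def prod.case
    by (rule measure_delay_space_box; intro sets_cgauss_seq_Collect; measurable)
  then show ?thesis
    using measure_cgauss_seq_coord[OF borel_sets_norm_square(1)[of \<tau>], of j]
      measure_cgauss_seq_coord[OF borel_sets_norm_square(3)[of "cmod \<rho> * sqrt \<tau> - sqrt v" "rho_bar \<rho>"], of "j + d"]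
    by (simp add: measure_cgauss_norm_square_ge tau_nonneg measure_uniform_delay_singleton[OF assms])
qed

lemma measure_spurious_lag:
  assumes "d \<in> {- int dm .. int dm}" "l \<noteq> d"
  shows "measure (delay_space dm) (spurious_lag (d, j) (l, i))
       = exp (- \<tau>) * (exp (- tx i) * exp (- tz i)) / (2 * real dm + 1)"
proof -
  have "measure (delay_space dm) (spurious_lag (d, j) (l, i))
      = measure cgauss_seq {x. \<tau> \<le> (cmod (x j))\<^sup>2 \<and> tx i \<le> (cmod (x (j + l - d)))\<^sup>2}
        * measure cgauss_seq {z. tz i \<le> (cmod (z (j + l)))\<^sup>2} * measure (uniform_delay dm) {d}"
    unfolding spurious_lag_def prod.case
    by (rule measure_delay_space_box; intro sets_cgauss_seq_Collect; measurable)
  moreover have "j \<noteq> j + l - d"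
    using assms by simp
  ultimately show ?thesis
    using measure_cgauss_seq_two_coords[OF _ borel_sets_norm_square(1)[of \<tau>] borel_sets_norm_square(1)[of "tx i"]]
      measure_cgauss_seq_coord[OF borel_sets_norm_square(1)[of "tz i"], of "j + l"]
    by (simp add: measure_cgauss_norm_square_ge tau_nonneg tx_nonneg tz_nonneg
        measure_uniform_delay_singleton[OF assms(1)])
qed

theorem mmie_perr_le:
  "mmie_perr \<rho> dm k \<le> (1 - exp (- \<tau>)) ^ 2 ^ k + 2 ^ k * exp (- \<tau>) *
     (measure cgauss {w. cmod \<rho> * sqrt \<tau> - sqrt v < rho_bar \<rho> * cmod w}
      + 2 * dm * (\<Sum>i<K. exp (- tx i) * exp (- tz i)))"
proof -
  let ?M = "delay_space dm" and ?D = "{- int dm .. int dm}" and ?W = "{0..<int (2 ^ k)}"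
  define p_noise where "p_noise = measure cgauss {w. cmod \<rho> * sqrt \<tau> - sqrt v < rho_bar \<rho> * cmod w}"
  define s_grid where "s_grid = (\<Sum>i<K. exp (- tx i) * exp (- tz i))"
  interpret prob_space ?M by (rule prob_space_delay_space)
  have peak_errors: "peak_errors \<in> sets ?M"
    by (intro sets.finite_UN sets.Un) (auto simp: sets_error_events)
  have per_peak: "measure ?M (noisy_peak p) + (\<Sum>q\<in>wrong_lags p. measure ?M (spurious_lag p q))
      = exp (- \<tau>) * (p_noise + 2 * dm * s_grid) / (2 * real dm + 1)" if "p \<in> ?D \<times> ?W" for p
  proof -
    obtain d j where p: "p = (d, j)" by (cases p)
    have d: "d \<in> ?D" using that p by auto
    have "(\<Sum>q\<in>wrong_lags p. measure ?M (spurious_lag p q))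
        = (\<Sum>(l, i)\<in>(?D - {d}) \<times> {..<K}. exp (- \<tau>) * (exp (- tx i) * exp (- tz i)) / (2 * real dm + 1))"
      unfolding p using measure_spurious_lag[OF d] by (intro sum.cong) auto
    also have "\<dots> = (\<Sum>l\<in>?D - {d}. \<Sum>i<K. exp (- \<tau>) * (exp (- tx i) * exp (- tz i)) / (2 * real dm + 1))"
      by (rule sum.cartesian_product[symmetric])
    also have "\<dots> = 2 * dm * (exp (- \<tau>) * s_grid / (2 * real dm + 1))"
      using d by (simp add: s_grid_def sum_distrib_left sum_divide_distrib)
    finally show ?thesis
      by (simp add: p measure_noisy_peak[OF d] p_noise_def add_divide_distrib algebra_simps)
  qed
  have "mmie_perr \<rho> dm k \<le> measure ?M (weak_peak \<union> delay_outside \<union> peak_errors)"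
    unfolding mmie_perr_def using mmie_error_event_subset peak_errors sets_error_events(1,2)
    by (intro finite_measure_mono sets.Un)
  also have "\<dots> \<le> measure ?M weak_peak + measure ?M delay_outside + measure ?M peak_errors"
    using peak_errors sets_error_events(1,2) by (intro order.trans[OF measure_Un_le] add_mono measure_Un_le) auto
  also have "measure ?M peak_errors
      \<le> (\<Sum>p\<in>?D \<times> ?W. measure ?M (noisy_peak p) + (\<Sum>q\<in>wrong_lags p. measure ?M (spurious_lag p q)))"
    by (intro measure_UN_Un_UN_le) (auto simp: sets_error_events)
  also have "\<dots> = 2 ^ k * exp (- \<tau>) * (p_noise + 2 * dm * s_grid)"
    using per_peak by (simp add: card_cartesian_product nat_power_eq)
  finally show ?thesis
    by (simp add: measure_weak_peak measure_delay_outside p_noise_def s_grid_def)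
qed

end

section \<open>Error exponents\<close>

lemma norm_square_mix_le:
  fixes \<rho> u w :: complex
  assumes "cmod \<rho> \<le> 1"
  shows "(cmod (\<rho> * u + complex_of_real (rho_bar \<rho>) * w))\<^sup>2 \<le> (cmod u)\<^sup>2 + (cmod w)\<^sup>2"
proof -
  define b where "b = rho_bar \<rho>"
  have b: "0 \<le> b" "b\<^sup>2 = 1 - (cmod \<rho>)\<^sup>2"
    using assms by (simp_all add: b_def power_le_one)
  have "cmod (\<rho> * u + complex_of_real b * w) \<le> cmod \<rho> * cmod u + b * cmod w"
    using norm_triangle_ineq[of "\<rho> * u" "complex_of_real b * w"] b by (simp add: norm_mult)
  then have "(cmod (\<rho> * u + complex_of_real b * w))\<^sup>2 \<le> (cmod \<rho> * cmod u + b * cmod w)\<^sup>2"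
    by (intro power_mono) auto
  also have "\<dots> \<le> ((cmod \<rho>)\<^sup>2 + b\<^sup>2) * ((cmod u)\<^sup>2 + (cmod w)\<^sup>2)"
    using sum_squares_ge_zero[of "cmod \<rho> * cmod w - b * cmod u" 0]
    by (simp add: power2_eq_square algebra_simps)
  also have "\<dots> = (cmod u)\<^sup>2 + (cmod w)\<^sup>2"
    using b by simp
  finally show ?thesis unfolding b_def .
qed

lemma grid_split:
  fixes X Z v :: real and K :: nat
  assumes "0 \<le> X" "0 \<le> Z" "0 \<le> v" "v \<le> X + Z" "0 < K"
  shows "\<exists>i<K. real i * v / K \<le> X \<and> (real K - 1 - real i) * v / K \<le> Z"
proof (cases "v = 0")
  case True
  then show ?thesis using assms by (intro exI[of _ 0]) auto
next
  case False
  then have v: "0 < v" using assms by simp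
  define f where "f = nat \<lfloor>X * K / v\<rfloor>"
  define i where "i = min (K - 1) f"
  have f: "real f \<le> X * K / v" "X * K / v < real f + 1"
    using assms v by (simp_all add: f_def)
  have "real i \<le> X * K / v"
    using f by (simp add: i_def)
  then have "real i * v / K \<le> X"
    using v assms by (simp add: field_simps)
  moreover have "(real K - 1 - real i) * v / K \<le> Z"
  proof (cases "i = K - 1")
    case True
    then show ?thesis using assms by (simp add: of_nat_diff)
  next
    case False
    then have "X < (real i + 1) * v / K"
      using f v assms by (simp add: i_def min_def field_simps split: if_splits)
    moreover have "v * K \<le> (X + Z) * K" using assms by (intro mult_right_mono) auto
    ultimately show ?thesis using assms by (simp add: field_simps)
  qed
  moreover have "i < K" using assms by (simp add: i_def)
  ultimately show ?thesis by blast
qed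

text \<open>By Cauchy-Schwarz a wrong lag of energy \<open>v\<close> has \<open>|u|^2 + |w|^2 \<ge> v\<close>, so
  (\<open>|u|^2\<close>, \<open>|w|^2\<close>) dominates one of the K grid points.\<close>
lemma mmie_union_bound_grid:
  assumes "cmod \<rho> \<le> 1" "0 \<le> \<tau>" "0 \<le> v" "0 < K"
  shows "mmie_union_bound \<rho> K \<tau> v (\<lambda>i. real i * v / K) (\<lambda>i. real (K - 1 - i) * v / K)"
proof
  fix u w :: complex
  assume "v \<le> (cmod (\<rho> * u + complex_of_real (rho_bar \<rho>) * w))\<^sup>2"
  then have "v \<le> (cmod u)\<^sup>2 + (cmod w)\<^sup>2"
    using norm_square_mix_le[OF assms(1)] order_trans by blast
  from grid_split[OF _ _ assms(3) this assms(4)] obtain i where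
    i: "i < K" "real i * v / K \<le> (cmod u)\<^sup>2" "(real K - 1 - real i) * v / K \<le> (cmod w)\<^sup>2"
    by auto
  moreover have "real (K - 1 - i) = real K - 1 - real i"
    using i(1) by (simp add: of_nat_diff)
  ultimately show "\<exists>i<K. real i * v / K \<le> (cmod u)\<^sup>2 \<and> real (K - 1 - i) * v / K \<le> (cmod w)\<^sup>2"
    by (intro exI[of _ i]) simp
qed (use assms in auto)

lemma one_minus_pow_le_exp:
  fixes x :: real
  assumes "x \<le> 1"
  shows "(1 - x) ^ n \<le> exp (- (real n * x))"
proof -
  have "(1 - x) ^ n \<le> exp (- x) ^ n"
    using assms exp_ge_add_one_self[of "- x"] by (intro power_mono) auto
  also have "\<dots> = exp (- (real n * x))" by (simp add: exp_of_nat_mult[symmetric])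
  finally show ?thesis .
qed

lemma sum_exp_grid_split:
  assumes K: "0 < K"
  shows "(\<Sum>i<K. exp (- (real i * v / K)) * exp (- (real (K - 1 - i) * v / K)))
       = K * exp (- (v * (real K - 1) / K))"
proof -
  have "exp (- (real i * v / K)) * exp (- (real (K - 1 - i) * v / K)) = exp (- (v * (real K - 1) / K))"
    if "i < K" for i
  proof -
    have "real i * v / K + real (K - 1 - i) * v / K = v * (real K - 1) / K"
      using that K by (simp add: of_nat_diff field_simps)
    then show ?thesis by (metis exp_add minus_add_distrib)
  qed
  then show ?thesis by simp
qed

lemma mmie_perr_le_exp_rates:
  fixes \<rho> :: complex and dm k K :: nat and c \<eta> E :: real
  defines "L \<equiv> real k * ln 2"
    and "\<gamma> \<equiv> (cmod \<rho> - sqrt c)\<^sup>2 / (rho_bar \<rho>)\<^sup>2" and "c' \<equiv> c * (real K - 1) / real K"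
  assumes \<rho>: "cmod \<rho> < 1" and K: "0 < K" and c: "0 \<le> c" "sqrt c \<le> cmod \<rho>"
    and \<eta>: "0 \<le> \<eta>" "\<eta> \<le> 1" and dm: "real dm \<le> exp (E * L)"
  shows "mmie_perr \<rho> dm k
    \<le> exp (- \<eta> * L) + exp ((\<eta> - \<gamma> * (1 - \<eta>)) * L) + 2 * K * exp ((\<eta> + E - c' * (1 - \<eta>)) * L)"
proof -
  define \<tau> where "\<tau> = (1 - \<eta>) * L"
  have \<tau>: "0 \<le> \<tau>" using \<eta> by (simp add: \<tau>_def L_def)
  interpret mmie_union_bound \<rho> dm k K \<tau> "c * \<tau>" "\<lambda>i. real i * (c * \<tau>) / K" "\<lambda>i. real (K - 1 - i) * (c * \<tau>) / K"
    using \<rho> \<tau> c K by (intro mmie_union_bound_grid) auto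
  have "(2::real) ^ k = exp L"
    unfolding L_def exp_of_nat_mult by simp
  then have N: "2 ^ k * exp (- \<tau>) = exp (\<eta> * L)"
    by (simp add: \<tau>_def exp_add[symmetric] algebra_simps)
  have "(1 - exp (- \<tau>)) ^ 2 ^ k \<le> exp (- (2 ^ k * exp (- \<tau>)))"
    using one_minus_pow_le_exp[of "exp (- \<tau>)" "2 ^ k"] \<tau> by simp
  also have "\<dots> \<le> exp (- \<eta> * L)"
    unfolding N using exp_ge_add_one_self[of "\<eta> * L"] by (simp del: exp_ge_add_one_self)
  finally have weak: "(1 - exp (- \<tau>)) ^ 2 ^ k \<le> exp (- \<eta> * L)" .
  have "0 < rho_bar \<rho>" using \<rho> by (simp add: power_less_one_iff abs_less_iff)
  moreover have "cmod \<rho> * sqrt \<tau> - sqrt (c * \<tau>) = (cmod \<rho> - sqrt c) * sqrt \<tau>"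
    by (simp add: real_sqrt_mult algebra_simps)
  ultimately have noise: "measure cgauss {w. cmod \<rho> * sqrt \<tau> - sqrt (c * \<tau>) < rho_bar \<rho> * cmod w}
      \<le> exp (- (\<gamma> * \<tau>))"
    using measure_cgauss_norm_gt_le[of "rho_bar \<rho>" "(cmod \<rho> - sqrt c) * sqrt \<tau>"] c \<tau>
    by (simp add: \<gamma>_def power_divide power_mult_distrib)
  have grid: "(\<Sum>i<K. exp (- (real i * (c * \<tau>) / K)) * exp (- (real (K - 1 - i) * (c * \<tau>) / K)))
      = K * exp (- (c' * \<tau>))"
    unfolding c'_def using sum_exp_grid_split[OF K, of "c * \<tau>"] by (simp add: algebra_simps)
  have "mmie_perr \<rho> dm k \<le> (1 - exp (- \<tau>)) ^ 2 ^ k + exp (\<eta> * L) *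
      (measure cgauss {w. cmod \<rho> * sqrt \<tau> - sqrt (c * \<tau>) < rho_bar \<rho> * cmod w} + 2 * dm * (K * exp (- (c' * \<tau>))))"
    using mmie_perr_le unfolding grid N .
  also have "\<dots> \<le> exp (- \<eta> * L) + exp (\<eta> * L) * (exp (- (\<gamma> * \<tau>)) + 2 * exp (E * L) * (K * exp (- (c' * \<tau>))))"
    using weak noise dm by (intro add_mono mult_left_mono mult_right_mono) auto
  also have "\<dots> = exp (- \<eta> * L) + exp ((\<eta> - \<gamma> * (1 - \<eta>)) * L) + 2 * K * exp ((\<eta> + E - c' * (1 - \<eta>)) * L)"
    by (simp add: \<tau>_def exp_add[symmetric] algebra_simps)
  finally show ?thesis .
qed

text \<open>Without noise a wrong lag beats the true one only if its own sample has energy at least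
  \<open>|x[J]|^2 \<ge> \<tau>\<close>, so the single grid point (\<open>\<tau>\<close>, 0) suffices; \<open>\<tau> = ln (2^k \<theta>)\<close>.\<close>
lemma mmie_perr_le_noiseless:
  fixes \<rho> :: complex and dm k :: nat and \<theta> :: real
  assumes \<rho>: "cmod \<rho> = 1" and \<theta>: "0 < \<theta>" "1 \<le> 2 ^ k * \<theta>" and dm: "real dm \<le> 2 ^ k * \<theta> ^ 3"
  shows "mmie_perr \<rho> dm k \<le> 3 * \<theta>"
proof -
  define N :: real where "N = 2 ^ k"
  define \<tau> where "\<tau> = ln (N * \<theta>)"
  have N: "0 < N" by (simp add: N_def)
  have \<tau>: "0 \<le> \<tau>" using \<theta> by (simp add: \<tau>_def N_def)
  have exp_\<tau>: "exp (- \<tau>) = 1 / (N * \<theta>)"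
    using N \<theta> by (simp add: \<tau>_def exp_minus field_simps)
  interpret mmie_union_bound \<rho> dm k 1 \<tau> \<tau> "\<lambda>_. \<tau>" "\<lambda>_. 0"
    by unfold_locales (use \<rho> \<tau> in \<open>auto simp: norm_mult\<close>)
  have "(1 - exp (- \<tau>)) ^ 2 ^ k \<le> exp (- (N * exp (- \<tau>)))"
    using one_minus_pow_le_exp[of "exp (- \<tau>)" "2 ^ k"] \<tau> by (simp add: N_def)
  also have "N * exp (- \<tau>) = 1 / \<theta>"
    using N \<theta> by (simp add: exp_\<tau>)
  also have "exp (- (1 / \<theta>)) \<le> \<theta>"
  proof -
    have "1 / \<theta> \<le> exp (1 / \<theta>)"
      using exp_ge_add_one_self[of "1 / \<theta>"] by (simp del: exp_ge_add_one_self)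
    then show ?thesis using \<theta> by (simp add: exp_minus field_simps)
  qed
  finally have weak: "(1 - exp (- \<tau>)) ^ 2 ^ k \<le> \<theta>" .
  have "N * exp (- \<tau>) * (2 * dm * exp (- \<tau>)) = 2 * dm / (N * \<theta>\<^sup>2)"
    using N \<theta> by (simp add: exp_\<tau> field_simps power2_eq_square)
  also have "\<dots> \<le> 2 * \<theta>"
    using dm N \<theta> by (simp add: N_def field_simps power2_eq_square power3_eq_cube)
  finally have "N * exp (- \<tau>) * (2 * dm * exp (- \<tau>)) \<le> 2 * \<theta>" .
  with weak show ?thesis
    using mmie_perr_le \<rho> by (simp add: N_def)
qed

section \<open>Convergence of the error probability\<close>

lemma mmie_E_pos:
  assumes "0 < cmod \<rho>" "cmod \<rho> \<le> 1"
  shows "0 < mmie_E \<rho>"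
proof -
  have "(cmod \<rho>)\<^sup>2 \<le> 1" using assms by (simp add: power_le_one)
  then show ?thesis using assms unfolding mmie_E_def by (intro divide_pos_pos) auto
qed

lemma mmie_E_less_norm_square:
  assumes "0 < cmod \<rho>" "cmod \<rho> < 1"
  shows "mmie_E \<rho> < (cmod \<rho>)\<^sup>2"
proof -
  define q where "q = (cmod \<rho>)\<^sup>2"
  have q: "0 < q" "q < 1"
    using assms by (simp_all add: q_def power_less_one_iff)
  then have "q * 1 < q * (2 - q)"
    by (intro mult_strict_left_mono) auto
  then show ?thesis
    using q by (simp add: mmie_E_def divide_less_eq flip: q_def)
qed

lemma tendsto_exp_neg_rate:
  fixes \<beta> :: real
  assumes "\<beta> < 0"
  shows "(\<lambda>k. exp (\<beta> * (real k * ln 2))) \<longlonglongrightarrow> 0"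
proof -
  have "exp (\<beta> * (real k * ln 2)) = exp (\<beta> * ln 2) ^ k" for k
    by (simp add: exp_of_nat_mult[symmetric] algebra_simps)
  moreover have "exp (\<beta> * ln 2) < 1"
    using assms by (simp add: mult_neg_pos)
  ultimately show ?thesis
    by (simp add: LIMSEQ_power_zero)
qed

lemma exists_grid_size:
  fixes c E :: real
  assumes "0 \<le> E" "E < c"
  shows "\<exists>K::nat. 0 < K \<and> E < c * (real K - 1) / real K"
proof -
  define K where "K = nat \<lceil>c / (c - E)\<rceil> + 1"
  have "c / (c - E) < real K"
    unfolding K_def using real_nat_ceiling_ge[of "c / (c - E)"] by linarith
  then have "c < real K * (c - E)"
    using assms by (simp add: field_simps)
  then have "E < c * (real K - 1) / real K"
    by (simp add: K_def field_simps)
  then show ?thesis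
    by (intro exI[of _ K]) (simp add: K_def)
qed

lemma exists_small_rate:
  fixes \<gamma> c E :: real
  assumes "0 < \<gamma>" "E < c" "0 < c"
  shows "\<exists>\<eta>>0. \<eta> \<le> 1 \<and> \<eta> - \<gamma> * (1 - \<eta>) < 0 \<and> \<eta> + E - c * (1 - \<eta>) < 0"
proof -
  define \<eta> where "\<eta> = min (\<gamma> / (2 * (1 + \<gamma>))) ((c - E) / (2 * (1 + c)))"
  have "\<eta> \<le> \<gamma> / (2 * (1 + \<gamma>))" "\<eta> \<le> (c - E) / (2 * (1 + c))"
    by (simp_all add: \<eta>_def)
  then have "\<eta> * (1 + \<gamma>) \<le> \<gamma> / 2" "\<eta> * (1 + c) \<le> (c - E) / 2"
    using assms by (simp_all add: field_simps)
  moreover have "0 < \<eta>" using assms by (simp add: \<eta>_def)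
  moreover have "\<gamma> / (2 * (1 + \<gamma>)) \<le> 1" using assms by (simp add: field_simps)
  then have "\<eta> \<le> 1" by (simp add: \<eta>_def)
  ultimately show ?thesis
    using assms by (intro exI[of _ \<eta>]) (auto simp: algebra_simps)
qed

lemma mmie_perr_tendsto_zero_noisy:
  fixes \<rho> :: complex and dm :: "nat \<Rightarrow> nat"
  assumes \<rho>: "0 < cmod \<rho>" "cmod \<rho> < 1"
    and dm: "(\<lambda>k. real (dm k)) \<in> o(\<lambda>k. 2 powr (real k * mmie_E \<rho>))"
  shows "(\<lambda>k. mmie_perr \<rho> (dm k) k) \<longlonglongrightarrow> 0"
proof -
  define E where "E = mmie_E \<rho>"
  define c where "c = (E + (cmod \<rho>)\<^sup>2) / 2"
  have E: "0 < E" "E < c" "c < (cmod \<rho>)\<^sup>2"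
    using mmie_E_pos[of \<rho>] mmie_E_less_norm_square[of \<rho>] \<rho> by (auto simp: E_def c_def)
  then have sqrt_c: "sqrt c < cmod \<rho>"
    using real_sqrt_less_mono[of c "(cmod \<rho>)\<^sup>2"] by simp
  obtain K :: nat where K: "0 < K" "E < c * (real K - 1) / real K"
    using exists_grid_size[of E c] E by auto
  define \<gamma> where "\<gamma> = (cmod \<rho> - sqrt c)\<^sup>2 / (rho_bar \<rho>)\<^sup>2"
  have "0 < rho_bar \<rho>"
    using \<rho> by (simp add: power_less_one_iff abs_less_iff)
  then have "0 < \<gamma>"
    using sqrt_c by (simp add: \<gamma>_def)
  then obtain \<eta> where \<eta>: "0 < \<eta>" "\<eta> \<le> 1" "\<eta> - \<gamma> * (1 - \<eta>) < 0"
      "\<eta> + E - c * (real K - 1) / real K * (1 - \<eta>) < 0"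
    using exists_small_rate[of \<gamma> E "c * (real K - 1) / real K"] K E by auto
  define U where "U k = exp (- \<eta> * (real k * ln 2)) + exp ((\<eta> - \<gamma> * (1 - \<eta>)) * (real k * ln 2))
     + 2 * real K * exp ((\<eta> + E - c * (real K - 1) / real K * (1 - \<eta>)) * (real k * ln 2))" for k
  have "U \<longlonglongrightarrow> 0 + 0 + 2 * real K * 0"
    unfolding U_def using \<eta> by (intro tendsto_add tendsto_mult tendsto_const tendsto_exp_neg_rate) auto
  then have U: "U \<longlonglongrightarrow> 0" by simp
  have bound: "\<forall>\<^sub>F k in sequentially. mmie_perr \<rho> (dm k) k \<le> U k"
    using landau_o.smallD[OF dm zero_less_one]
  proof eventually_elim
    case (elim k)
    have "2 powr (real k * mmie_E \<rho>) = exp (E * (real k * ln 2))"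
      by (simp add: powr_def E_def algebra_simps)
    with elim have dm_k: "real (dm k) \<le> exp (E * (real k * ln 2))"
      by simp
    have c: "0 \<le> c" using E by simp
    show ?case
      using mmie_perr_le_exp_rates[OF \<rho>(2) K(1) c less_imp_le[OF sqrt_c] less_imp_le[OF \<eta>(1)] \<eta>(2) dm_k]
      by (simp only: U_def \<gamma>_def)
  qed
  show ?thesis
    by (rule tendsto_sandwich[OF _ bound tendsto_const U]) (simp add: mmie_perr_def)
qed

text \<open>Here E(SNR) = 1, so \<open>dm = o(2^k)\<close> only; the threshold is adapted to \<open>dm\<close> through
  \<open>\<theta>^3 = (dm + 1) / 2^k\<close>.\<close>
lemma mmie_perr_tendsto_zero_noiseless:
  fixes \<rho> :: complex and dm :: "nat \<Rightarrow> nat"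
  assumes \<rho>: "cmod \<rho> = 1"
    and dm: "(\<lambda>k. real (dm k)) \<in> o(\<lambda>k. 2 powr (real k * mmie_E \<rho>))"
  shows "(\<lambda>k. mmie_perr \<rho> (dm k) k) \<longlonglongrightarrow> 0"
proof -
  define q where "q k = (real (dm k) + 1) / 2 ^ k" for k
  define \<theta> where "\<theta> k = root 3 (q k)" for k
  have "2 powr (real k * mmie_E \<rho>) = 2 ^ k" for k
    using \<rho> by (simp add: mmie_E_def powr_realpow)
  then have "(\<lambda>k. real (dm k) / 2 ^ k) \<longlonglongrightarrow> 0"
    using smalloD_tendsto[OF dm] by simp
  moreover have "(\<lambda>k. 1 / 2 ^ k :: real) \<longlonglongrightarrow> 0"
    using LIMSEQ_power_zero[of "1 / 2 :: real"] by (simp add: power_one_over)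
  ultimately have "q \<longlonglongrightarrow> 0 + 0"
    unfolding q_def add_divide_distrib by (rule tendsto_add)
  then have q: "q \<longlonglongrightarrow> 0" by simp
  have bound: "\<forall>\<^sub>F k in sequentially. mmie_perr \<rho> (dm k) k \<le> 3 * \<theta> k"
    using order_tendstoD(2)[OF q zero_less_one]
  proof eventually_elim
    case (elim k)
    have q_pos: "0 < q k" by (simp add: q_def add_pos_nonneg)
    have \<theta>: "0 < \<theta> k" "\<theta> k ^ 3 = q k" "\<theta> k \<le> 1"
      using q_pos elim by (simp_all add: \<theta>_def)
    then have "q k \<le> \<theta> k"
      using power_decreasing[of 1 3 "\<theta> k"] by simp
    then have "real (dm k) + 1 \<le> 2 ^ k * \<theta> k"
      by (simp add: q_def divide_le_eq mult.commute)
    then have "1 \<le> 2 ^ k * \<theta> k"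
      by simp
    moreover have "real (dm k) \<le> 2 ^ k * \<theta> k ^ 3"
      unfolding \<theta>(2) by (simp add: q_def)
    ultimately show ?case
      using mmie_perr_le_noiseless[OF \<rho> \<theta>(1)] by simp
  qed
  have "\<theta> \<longlonglongrightarrow> root 3 0"
    unfolding \<theta>_def by (rule tendsto_real_root[OF q])
  then have "(\<lambda>k. 3 * \<theta> k) \<longlonglongrightarrow> 3 * 0"
    by (intro tendsto_mult tendsto_const) simp
  then show ?thesis
    by (intro tendsto_sandwich[OF _ bound tendsto_const]) (simp_all add: mmie_perr_def)
qed

lemma mmie_perr_tendsto_zero:
  fixes \<rho> :: complex and dm :: "nat \<Rightarrow> nat"
  assumes "0 < cmod \<rho>" "cmod \<rho> \<le> 1" "(\<lambda>k. real (dm k)) \<in> o(\<lambda>k. 2 powr (real k * mmie_E \<rho>))"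
  shows "(\<lambda>k. mmie_perr \<rho> (dm k) k) \<longlonglongrightarrow> 0"
  using assms mmie_perr_tendsto_zero_noisy mmie_perr_tendsto_zero_noiseless
  by (cases "cmod \<rho> = 1") auto

lemma const_in_smallo_mmie_rate:
  assumes "0 < cmod \<rho>" "cmod \<rho> \<le> 1"
  shows "(\<lambda>k::nat. real c) \<in> o(\<lambda>k. 2 powr (real k * mmie_E \<rho>))"
proof (rule smalloI_tendsto)
  have "real c / 2 powr (real k * mmie_E \<rho>) = real c * exp (- mmie_E \<rho> * (real k * ln 2))" for k
    by (simp add: powr_def exp_minus field_simps)
  moreover have "(\<lambda>k. real c * exp (- mmie_E \<rho> * (real k * ln 2))) \<longlonglongrightarrow> real c * 0"
    using mmie_E_pos[OF assms] by (intro tendsto_mult tendsto_const tendsto_exp_neg_rate) auto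
  ultimately show "(\<lambda>k. real c / 2 powr (real k * mmie_E \<rho>)) \<longlonglongrightarrow> 0"
    by simp
qed simp

theorem corollary1:
  fixes \<rho> :: complex
  assumes "0 < cmod \<rho>" and "cmod \<rho> \<le> 1"
  shows "(\<forall>dm::nat. (\<forall>k. mmie_error_event \<rho> dm k \<in> sets (delay_space dm))
                    \<and> (\<lambda>k. mmie_perr \<rho> dm k) \<longlonglongrightarrow> 0)
     \<and> (\<forall>dm::nat \<Rightarrow> nat. (\<lambda>k. real (dm k)) \<in> o(\<lambda>k. 2 powr (real k * mmie_E \<rho>)) \<longrightarrow>
           (\<forall>k. mmie_error_event \<rho> (dm k) k \<in> sets (delay_space (dm k)))
           \<and> (\<lambda>k. mmie_perr \<rho> (dm k) k) \<longlonglongrightarrow> 0)"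
  using mmie_error_event_sets mmie_perr_tendsto_zero[OF assms]
    mmie_perr_tendsto_zero[OF assms const_in_smallo_mmie_rate[OF assms]]
  by blast

end
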